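(* Let $G$ be a locally compact group and let $f,g,f_1,\dots,f_n,g_1,\dots,g_n\in C_0(G)$ be non-zero functions such that $f(xy)g(y)=\sum_{i=1}^n f_i(x)g_i(y)$ for all $x,y\in G$. Then $G$ has a compact open subgroup $H$, and there are functions $f'_j\in C_0(G)$ and $g'_j\in C(H)$ ($j=1,\dots,n$) such that $f(xy)=\sum_{j=1}^n f'_j(x)g'_j(y)$ for all $x\in G$, $y\in H$.
   Context: $C_0(G)$ denotes the continuous complex functions on $G$ vanishing at infinity. *)

theory Defs
  imports "HOL-Analysis.Analysis" "HOL-Algebra.Group"
begin

definition topological_group :: "('a, 'b) monoid_scheme \<Rightarrow> 'a topology \<Rightarrow> bool" where
  "topological_group G T \<longleftrightarrow>
     group G \<and> topspace T = carrier G \<and>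
     continuous_map (prod_topology T T) T (\<lambda>(x, y). x \<otimes>\<^bsub>G\<^esub> y) \<and>
     continuous_map T T (\<lambda>x. inv\<^bsub>G\<^esub> x)"

definition locally_compact_group :: "('a, 'b) monoid_scheme \<Rightarrow> 'a topology \<Rightarrow> bool" where
  "locally_compact_group G T \<longleftrightarrow>
     topological_group G T \<and> Hausdorff_space T \<and> locally_compact_space T"

definition C0 :: "'a topology \<Rightarrow> ('a \<Rightarrow> complex) \<Rightarrow> bool" where
  "C0 T f \<longleftrightarrow> continuous_map T euclidean f \<and>
     (\<forall>e>0. \<exists>K. compactin T K \<and> (\<forall>x \<in> topspace T - K. norm (f x) < e))"

end

theory Submission
  imports Defs
begin

(* Fix a with g a \<noteq> 0. For b in the open set B = {b. g (a b) \<noteq> 0} the functional equation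
   writes the right translate f(- b) as a combination of the n functions fs i (- a^-1), so these
   translates span a space of dimension at most n. Hence there are points q l and functions v l,
   combinations of finitely many translates f(- b) with b in a finite B0, such that every such
   translate w satisfies w x = (SUM l. w (q l) * v l x); let V be the space of all functions with
   this reproducing property. Right translation by z preserves V as soon as z B0 \<subseteq> B, which
   holds near the identity, so the stabiliser H of V under right translations is an open, hence
   closed, subgroup. For z in H, f (x0) = (SUM l. f (q l z) * v l (x0 z^-1)) with f x0 \<noteq> 0 and f
   bounded forces some v l (x0 z^-1) to be bounded away from 0; as the v l vanish at infinity, H is
   compact. Finally f (x y) = (SUM j. v j x * f (q j y)) for y in H. *)

inductive_set fun_span :: "('a \<Rightarrow> 'b::comm_ring_1) set \<Rightarrow> ('a \<Rightarrow> 'b) set" for S where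
  fun_span_zero: "(\<lambda>x. 0) \<in> fun_span S"
| fun_span_base: "w \<in> S \<Longrightarrow> w \<in> fun_span S"
| fun_span_add: "w \<in> fun_span S \<Longrightarrow> w' \<in> fun_span S \<Longrightarrow> (\<lambda>x. w x + w' x) \<in> fun_span S"
| fun_span_scale: "w \<in> fun_span S \<Longrightarrow> (\<lambda>x. c * w x) \<in> fun_span S"

lemma fun_span_diff:
  assumes "w \<in> fun_span S" "w' \<in> fun_span S"
  shows "(\<lambda>x. w x - w' x) \<in> fun_span S"
  using fun_span_add[OF assms(1) fun_span_scale[OF assms(2), of "-1"]] by simp

lemma fun_span_minimal:
  assumes "S \<subseteq> fun_span S'"
  shows "fun_span S \<subseteq> fun_span S'"
proof
  show "w \<in> fun_span S'" if "w \<in> fun_span S" for w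
    using that by induction (use assms in \<open>auto intro: fun_span.intros\<close>)
qed

lemma fun_span_mono: "S \<subseteq> S' \<Longrightarrow> fun_span S \<subseteq> fun_span S'"
  by (rule fun_span_minimal) (auto intro: fun_span_base)

lemma fun_span_sum:
  assumes "finite J" "\<forall>j\<in>J. w j \<in> fun_span S"
  shows "(\<lambda>x. \<Sum>j\<in>J. c j * w j x) \<in> fun_span S"
  using assms by (induction J rule: finite_induct) (auto intro: fun_span.intros)

lemma fun_span_comp:
  "w \<in> fun_span S \<Longrightarrow> (\<lambda>x. w (h x)) \<in> fun_span ((\<lambda>s x. s (h x)) ` S)"
  by (induction rule: fun_span.induct) (auto intro: fun_span.intros)

lemma fun_span_finite_subset:
  assumes "w \<in> fun_span S"
  shows "\<exists>S0\<subseteq>S. finite S0 \<and> w \<in> fun_span S0"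
  using assms
proof induction
  case (fun_span_add w w')
  then obtain S1 S2 where "S1 \<subseteq> S" "finite S1" "w \<in> fun_span S1"
    and "S2 \<subseteq> S" "finite S2" "w' \<in> fun_span S2" by blast
  then show ?case
    using fun_span_mono[of S1 "S1 \<union> S2"] fun_span_mono[of S2 "S1 \<union> S2"]
    by (intro exI[of _ "S1 \<union> S2"]) (auto intro: fun_span.intros)
qed (auto intro: fun_span.intros)

lemma fun_span_finite_subset_family:
  assumes "finite I" "\<forall>l\<in>I. v l \<in> fun_span S"
  shows "\<exists>S0\<subseteq>S. finite S0 \<and> (\<forall>l\<in>I. v l \<in> fun_span S0)"
proof -
  have "\<forall>l\<in>I. \<exists>S0. S0 \<subseteq> S \<and> finite S0 \<and> v l \<in> fun_span S0"
    using assms(2) fun_span_finite_subset by blast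
  then obtain S' where S': "\<forall>l\<in>I. S' l \<subseteq> S \<and> finite (S' l) \<and> v l \<in> fun_span (S' l)"
    by metis
  show ?thesis
    using S' assms(1) fun_span_mono[of "S' _" "\<Union> (S' ` I)"]
    by (intro exI[of _ "\<Union> (S' ` I)"]) blast
qed

definition interpolation_space ::
    "'a set \<Rightarrow> 'i set \<Rightarrow> ('i \<Rightarrow> 'a) \<Rightarrow> ('i \<Rightarrow> 'a \<Rightarrow> 'b::comm_ring_1) \<Rightarrow> ('a \<Rightarrow> 'b) set" where
  "interpolation_space X I q v = {w. \<forall>x\<in>X. w x = (\<Sum>l\<in>I. w (q l) * v l x)}"

lemma interpolation_space_cong:
  assumes "q ` I \<subseteq> X" "w \<in> interpolation_space X I q v" "\<forall>x\<in>X. w' x = w x"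
  shows "w' \<in> interpolation_space X I q v"
proof -
  have "w' (q l) = w (q l)" if "l \<in> I" for l
    using assms(1,3) that by auto
  then show ?thesis
    using assms(2,3) by (simp add: interpolation_space_def cong: sum.cong)
qed

lemma fun_span_subset_interpolation_space:
  assumes "S \<subseteq> interpolation_space X I q v"
  shows "fun_span S \<subseteq> interpolation_space X I q v"
proof
  show "w \<in> interpolation_space X I q v" if "w \<in> fun_span S" for w
    using that
  proof induction
    case (fun_span_add w w')
    then show ?case by (simp add: interpolation_space_def sum.distrib distrib_right)
  next
    case (fun_span_scale w c)
    then show ?case by (simp add: interpolation_space_def sum_distrib_left mult.assoc)
  qed (use assms in \<open>auto simp: interpolation_space_def\<close>)
qed

text \<open>The projection \<open>w \<mapsto> w - w p * e\<close> kills \<open>e\<close>, whose coefficient on some \<open>u k\<close> is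
  nonzero because \<open>e p = 1\<close>; so the projected \<open>u k\<close> is a combination of the other projected
  generators.\<close>
lemma projection_spanned_by_fewer:
  fixes u :: "'i \<Rightarrow> 'a \<Rightarrow> 'b::field"
  assumes "finite I" "p \<in> X" "e p = 1" and e: "\<forall>x\<in>X. e x = (\<Sum>i\<in>I. d i * u i x)"
  shows "\<exists>k\<in>I. \<exists>u'. \<forall>w c. (\<forall>x\<in>X. w x = (\<Sum>i\<in>I. c i * u i x)) \<longrightarrow>
           (\<exists>c'. \<forall>x\<in>X. w x - w p * e x = (\<Sum>i\<in>I - {k}. c' i * u' i x))"
proof -
  define u' where "u' = (\<lambda>i x. u i x - u i p * e x)"
  have proj: "w x - w p * e x = (\<Sum>i\<in>I. c i * u' i x)"
    if "\<forall>x\<in>X. w x = (\<Sum>i\<in>I. c i * u i x)" "x \<in> X" for w c x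
    using that assms(2)
    by (simp add: u'_def sum_distrib_right right_diff_distrib sum_subtractf mult.assoc)
  have "(\<Sum>i\<in>I. d i * u i p) \<noteq> 0"
    using e assms(2,3) by auto
  then obtain k where k: "k \<in> I" "d k \<noteq> 0"
    by (metis (no_types, lifting) mult_zero_left sum.neutral)
  have split: "(\<Sum>i\<in>I. c i * u' i x) = c k * u' k x + (\<Sum>i\<in>I - {k}. c i * u' i x)" for c x
    using assms(1) k(1) by (simp add: sum.remove)
  have uk: "u' k x = - (\<Sum>i\<in>I - {k}. d i * u' i x) / d k" if "x \<in> X" for x
  proof -
    have "(\<Sum>i\<in>I. d i * u' i x) = 0"
      using proj[OF e that] assms(3) by simp
    then show ?thesis
      using k(2) by (simp add: split field_simps add_eq_0_iff)
  qed
  show ?thesis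
  proof (intro bexI[OF _ k(1)] exI[of _ u'] allI impI)
    fix w c assume w: "\<forall>x\<in>X. w x = (\<Sum>i\<in>I. c i * u i x)"
    show "\<exists>c'. \<forall>x\<in>X. w x - w p * e x = (\<Sum>i\<in>I - {k}. c' i * u' i x)"
    proof (intro exI[of _ "\<lambda>i. c i - c k * d i / d k"] ballI)
      fix x assume x: "x \<in> X"
      have "w x - w p * e x = c k * u' k x + (\<Sum>i\<in>I - {k}. c i * u' i x)"
        using proj[OF w x] by (simp add: split)
      also have "\<dots> = (\<Sum>i\<in>I - {k}. (c i - c k * d i / d k) * u' i x)"
        by (simp add: uk[OF x] sum_distrib_left sum_divide_distrib left_diff_distrib
            sum_subtractf sum_negf algebra_simps)
      finally show "w x - w p * e x = (\<Sum>i\<in>I - {k}. (c i - c k * d i / d k) * u' i x)" .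
    qed
  qed
qed

lemma interpolation_space_insert:
  assumes "finite I" "k \<in> I"
    and "(\<lambda>x. \<phi> x - \<phi> p * e x) \<in> interpolation_space X (I - {k}) q v"
  shows "\<phi> \<in> interpolation_space X I (q(k := p)) (v(k := \<lambda>x. e x - (\<Sum>l\<in>I - {k}. e (q l) * v l x)))"
  unfolding interpolation_space_def
proof (intro CollectI ballI)
  fix x assume x: "x \<in> X"
  have "\<phi> x - \<phi> p * e x = (\<Sum>l\<in>I - {k}. (\<phi> (q l) - \<phi> p * e (q l)) * v l x)"
    using assms(3) x by (simp add: interpolation_space_def)
  also have "\<dots> = (\<Sum>l\<in>I - {k}. \<phi> (q l) * v l x) - \<phi> p * (\<Sum>l\<in>I - {k}. e (q l) * v l x)"
    by (simp add: left_diff_distrib sum_subtractf sum_distrib_left mult.assoc)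
  finally have "\<phi> x = \<phi> p * (e x - (\<Sum>l\<in>I - {k}. e (q l) * v l x)) + (\<Sum>l\<in>I - {k}. \<phi> (q l) * v l x)"
    by (simp add: algebra_simps)
  then show "\<phi> x = (\<Sum>l\<in>I. \<phi> ((q(k := p)) l) * (v(k := \<lambda>x. e x - (\<Sum>l\<in>I - {k}. e (q l) * v l x))) l x)"
    using assms(1,2) by (simp add: sum.remove)
qed

text \<open>Induction on the number of spanning functions: normalise some \<open>\<phi>1 \<in> S\<close> not vanishing at a
  node \<open>p\<close>, interpolate the projections \<open>\<phi> - \<phi> p * e\<close> with one generator fewer, and add
  \<open>p\<close> as a new node.\<close>
lemma interpolation_basis_exists:
  fixes u :: "'i \<Rightarrow> 'a \<Rightarrow> 'b::field"
  assumes "finite I" "X \<noteq> {}" "\<forall>\<phi>\<in>S. \<exists>c. \<forall>x\<in>X. \<phi> x = (\<Sum>i\<in>I. c i * u i x)"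
  shows "\<exists>q v. q ` I \<subseteq> X \<and> (\<forall>l\<in>I. v l \<in> fun_span S) \<and> S \<subseteq> interpolation_space X I q v"
  using assms
proof (induction "card I" arbitrary: I S u rule: less_induct)
  case less
  show ?case
  proof (cases "\<forall>\<phi>\<in>S. \<forall>x\<in>X. \<phi> x = 0")
    case True
    obtain x0 where "x0 \<in> X" using less.prems(2) by blast
    with True show ?thesis
      by (intro exI[of _ "\<lambda>_. x0"] exI[of _ "\<lambda>_ _. 0"])
         (auto simp: interpolation_space_def intro: fun_span_zero)
  next
    case False
    then obtain \<phi>1 p where \<phi>1: "\<phi>1 \<in> S" "p \<in> X" "\<phi>1 p \<noteq> 0" by blast
    define e where "e = (\<lambda>x. \<phi>1 x / \<phi>1 p)"
    define P where "P = (\<lambda>\<phi> x. \<phi> x - \<phi> p * e x)"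
    obtain d where "\<forall>x\<in>X. \<phi>1 x = (\<Sum>i\<in>I. d i * u i x)" using less.prems(3) \<phi>1(1) by blast
    then have e_span: "\<forall>x\<in>X. e x = (\<Sum>i\<in>I. (d i / \<phi>1 p) * u i x)"
      by (simp add: e_def sum_divide_distrib)
    have "e p = 1"
      using \<phi>1(3) by (simp add: e_def)
    from projection_spanned_by_fewer[OF less.prems(1) \<phi>1(2) this e_span]
    obtain k u' where k: "k \<in> I" and proj: "\<forall>w c. (\<forall>x\<in>X. w x = (\<Sum>i\<in>I. c i * u i x)) \<longrightarrow>
        (\<exists>c'. \<forall>x\<in>X. w x - w p * e x = (\<Sum>i\<in>I - {k}. c' i * u' i x))"
      by blast
    have "\<forall>\<psi>\<in>P ` S. \<exists>c. \<forall>x\<in>X. \<psi> x = (\<Sum>i\<in>I - {k}. c i * u' i x)"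
      using proj less.prems(3) unfolding P_def by blast
    from less.hyps[OF card_Diff1_less[OF less.prems(1) k] finite_Diff[OF less.prems(1)] less.prems(2) this]
    obtain q' v' where q': "q' ` (I - {k}) \<subseteq> X"
      and v': "\<forall>l\<in>I - {k}. v' l \<in> fun_span (P ` S)"
      and PS: "P ` S \<subseteq> interpolation_space X (I - {k}) q' v'"
      by blast
    have eS: "e \<in> fun_span S"
      using fun_span_scale[OF fun_span_base[OF \<phi>1(1)], of "1 / \<phi>1 p"] by (simp add: e_def)
    then have "P ` S \<subseteq> fun_span S"
      using fun_span_diff[OF fun_span_base fun_span_scale[OF eS]] by (auto simp: P_def)
    then have v'S: "\<forall>l\<in>I - {k}. v' l \<in> fun_span S"
      using v' fun_span_minimal by blast
    define q where "q = q'(k := p)"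
    define v where "v = v'(k := \<lambda>x. e x - (\<Sum>l\<in>I - {k}. e (q' l) * v' l x))"
    have "S \<subseteq> interpolation_space X I q v"
    proof
      fix \<phi> assume "\<phi> \<in> S"
      then have "(\<lambda>x. \<phi> x - \<phi> p * e x) \<in> interpolation_space X (I - {k}) q' v'"
        using PS by (auto simp: P_def)
      then show "\<phi> \<in> interpolation_space X I q v"
        unfolding q_def v_def by (rule interpolation_space_insert[OF less.prems(1) k])
    qed
    moreover have "v k \<in> fun_span S"
      using eS fun_span_sum[OF _ v'S, of "\<lambda>l. e (q' l)"] less.prems(1)
      by (auto simp: v_def intro: fun_span_diff)
    ultimately show ?thesis
      using q' \<phi>1(2) v'S by (intro exI[of _ q] exI[of _ v]) (auto simp: q_def v_def)
  qed
qed

lemma C0_zero: "C0 T (\<lambda>x. 0)"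
  unfolding C0_def by (auto intro!: exI[of _ "{}"])

lemma C0_add:
  assumes "C0 T f" "C0 T g"
  shows "C0 T (\<lambda>x. f x + g x)"
  unfolding C0_def
proof (intro conjI allI impI)
  show "continuous_map T euclidean (\<lambda>x. f x + g x)"
    using assms unfolding C0_def by (simp add: continuous_map_add)
  fix e :: real assume "e > 0"
  then obtain K1 K2 where K: "compactin T K1" "\<forall>x\<in>topspace T - K1. norm (f x) < e/2"
    "compactin T K2" "\<forall>x\<in>topspace T - K2. norm (g x) < e/2"
    using assms unfolding C0_def by (meson half_gt_zero)
  have "norm (f x + g x) < e" if "x \<in> topspace T - (K1 \<union> K2)" for x
  proof -
    have "norm (f x) < e/2" "norm (g x) < e/2"
      using K(2,4) that by auto
    then show ?thesis by (intro norm_triangle_lt) linarith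
  qed
  then show "\<exists>K. compactin T K \<and> (\<forall>x\<in>topspace T - K. norm (f x + g x) < e)"
    using K(1,3) compactin_Un by blast
qed

lemma C0_cmult:
  assumes "C0 T f"
  shows "C0 T (\<lambda>x. c * f x)"
  unfolding C0_def
proof (intro conjI allI impI)
  show "continuous_map T euclidean (\<lambda>x. c * f x)"
    using assms unfolding C0_def by (simp add: continuous_map_atin tendsto_mult_left)
  fix e :: real assume "e > 0"
  then have "e / (norm c + 1) > 0"
    by (intro divide_pos_pos) (auto intro: add_nonneg_pos)
  then obtain K where K: "compactin T K" "\<forall>x\<in>topspace T - K. norm (f x) < e / (norm c + 1)"
    using assms unfolding C0_def by blast
  have "norm (c * f x) < e" if "x \<in> topspace T - K" for x
  proof -
    have "norm (c * f x) \<le> (norm c + 1) * norm (f x)"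
      by (simp add: norm_mult mult_right_mono)
    also have "\<dots> < e"
      using K(2) that by (simp add: field_simps add_pos_nonneg)
    finally show ?thesis .
  qed
  then show "\<exists>K. compactin T K \<and> (\<forall>x\<in>topspace T - K. norm (c * f x) < e)"
    using K(1) by blast
qed

lemma C0_fun_span:
  assumes "\<forall>w\<in>S. C0 T w" "w \<in> fun_span S"
  shows "C0 T w"
  using assms(2) by induction (use assms(1) in \<open>auto intro: C0_zero C0_add C0_cmult\<close>)

lemma C0_bounded:
  assumes "C0 T f"
  obtains B where "\<forall>x\<in>topspace T. norm (f x) \<le> B"
proof -
  obtain K where K: "compactin T K" "\<forall>x\<in>topspace T - K. norm (f x) < 1"
    using assms unfolding C0_def by (meson zero_less_one)
  have "compact (f ` K)"
    using K(1) assms unfolding C0_def by (metis compactin_euclidean_iff image_compactin)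
  then obtain B where "\<forall>y\<in>f ` K. norm y \<le> B"
    by (meson bounded_iff compact_imp_bounded)
  with K(2) have "\<forall>x\<in>topspace T. norm (f x) \<le> max B 1"
    by (force simp: le_max_iff_disj)
  then show ?thesis by (rule that)
qed

lemma compactin_C0_norm_ge:
  assumes "C0 T w" "e > 0"
  shows "compactin T {x \<in> topspace T. e \<le> norm (w x)}"
proof -
  obtain K where K: "compactin T K" "\<forall>x\<in>topspace T - K. norm (w x) < e"
    using assms unfolding C0_def by blast
  have "closedin T {x \<in> topspace T. w x \<in> {y. e \<le> norm y}}"
    using assms(1) unfolding C0_def
    by (intro closedin_continuous_map_preimage[where Y = euclidean])
       (simp_all add: closed_Collect_le continuous_on_norm_id)
  moreover have "{x \<in> topspace T. e \<le> norm (w x)} \<subseteq> K"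
    using K(2) by force
  ultimately show ?thesis
    using K(1) closed_compactin by fastforce
qed

context group
begin

lemma continuous_map_group_mult:
  assumes "topological_group G T" "continuous_map X T a" "continuous_map X T b"
  shows "continuous_map X T (\<lambda>x. a x \<otimes> b x)"
proof -
  have "continuous_map (prod_topology T T) T (\<lambda>(x, y). x \<otimes> y)"
    using assms(1) by (simp add: topological_group_def)
  from continuous_map_compose[OF continuous_map_pairedI[OF assms(2,3)] this]
  show ?thesis by (simp add: o_def)
qed

lemma continuous_map_group_inv:
  assumes "topological_group G T" "continuous_map X T a"
  shows "continuous_map X T (\<lambda>x. inv (a x))"
proof -
  have "continuous_map T T (\<lambda>x. inv x)"
    using assms(1) by (simp add: topological_group_def)
  from continuous_map_compose[OF assms(2) this]
  show ?thesis by (simp add: o_def)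
qed

lemma continuous_map_group_const:
  assumes "topological_group G T" "c \<in> carrier G"
  shows "continuous_map X T (\<lambda>x. c)"
  using assms by (simp add: topological_group_def)

lemma continuous_map_left_mult:
  assumes "topological_group G T" "c \<in> carrier G"
  shows "continuous_map T T (\<lambda>x. c \<otimes> x)"
  using assms
  by (intro continuous_map_group_mult continuous_map_group_const continuous_map_id[unfolded id_def])

lemma continuous_map_right_mult:
  assumes "topological_group G T" "c \<in> carrier G"
  shows "continuous_map T T (\<lambda>x. x \<otimes> c)"
  using assms
  by (intro continuous_map_group_mult continuous_map_group_const continuous_map_id[unfolded id_def])

lemma continuous_map_left_translate:
  assumes "topological_group G T" "continuous_map T euclidean f" "c \<in> carrier G"
  shows "continuous_map T euclidean (\<lambda>y. f (c \<otimes> y))"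
  using continuous_map_compose[OF continuous_map_left_mult[OF assms(1,3)] assms(2)]
  by (simp add: o_def)

lemma C0_right_translate:
  assumes tg: "topological_group G T" and w: "C0 T w" and c: "c \<in> carrier G"
  shows "C0 T (\<lambda>x. w (x \<otimes> c))"
  unfolding C0_def
proof (intro conjI allI impI)
  have tsp: "topspace T = carrier G"
    using tg by (simp add: topological_group_def)
  show "continuous_map T euclidean (\<lambda>x. w (x \<otimes> c))"
    using continuous_map_compose[OF continuous_map_right_mult[OF tg c], of euclidean w] w
    by (simp add: C0_def o_def)
  fix e :: real assume "e > 0"
  then obtain K where K: "compactin T K" "\<forall>x\<in>topspace T - K. norm (w x) < e"
    using w unfolding C0_def by blast
  have "compactin T ((\<lambda>k. k \<otimes> inv c) ` K)"
    using K(1) continuous_map_right_mult[OF tg inv_closed[OF c]] by (rule image_compactin)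
  moreover have "norm (w (x \<otimes> c)) < e" if "x \<in> topspace T - (\<lambda>k. k \<otimes> inv c) ` K" for x
  proof -
    have "x = (x \<otimes> c) \<otimes> inv c"
      using that c tsp by (simp add: m_assoc)
    then have "x \<otimes> c \<notin> K"
      using that by blast
    then show ?thesis
      using K(2) that c tsp by simp
  qed
  ultimately show "\<exists>K. compactin T K \<and> (\<forall>x\<in>topspace T - K. norm (w (x \<otimes> c)) < e)"
    by blast
qed

lemma openin_left_mult_preimage:
  assumes "topological_group G T" "openin T U" "z \<in> carrier G"
  shows "openin T {x \<in> topspace T. z \<otimes> x \<in> U}"
  using assms by (intro openin_continuous_map_preimage[OF continuous_map_left_mult])

lemma openin_right_mults_preimage:
  assumes tg: "topological_group G T" and "openin T U" "finite B" "B \<subseteq> carrier G"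
  shows "openin T {z \<in> topspace T. \<forall>b\<in>B. z \<otimes> b \<in> U}"
proof -
  have "openin T ((\<Inter>b\<in>B. {z \<in> topspace T. z \<otimes> b \<in> U}) \<inter> topspace T)"
    using assms by (intro openin_INT openin_continuous_map_preimage[OF continuous_map_right_mult]) auto
  moreover have "(\<Inter>b\<in>B. {z \<in> topspace T. z \<otimes> b \<in> U}) \<inter> topspace T = {z \<in> topspace T. \<forall>b\<in>B. z \<otimes> b \<in> U}"
    by auto
  ultimately show ?thesis by simp
qed

lemma subgroup_openin_if_nhd_one:
  assumes tg: "topological_group G T" and H: "subgroup H G"
    and N: "openin T N" "\<one> \<in> N" "N \<subseteq> H"
  shows "openin T H"
proof (subst openin_subopen, intro ballI)
  fix z assume z: "z \<in> H"
  then have zc: "z \<in> carrier G"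
    using H subgroup.subset by blast
  define U where "U = {x \<in> topspace T. inv z \<otimes> x \<in> N}"
  have "U \<subseteq> H"
  proof
    fix x assume x: "x \<in> U"
    then have "z \<otimes> (inv z \<otimes> x) \<in> H"
      using z N(3) H by (auto simp: U_def intro: subgroup.m_closed)
    then show "x \<in> H"
      using x zc tg by (simp add: U_def topological_group_def m_assoc[symmetric])
  qed
  moreover have "z \<in> U"
    using zc N(2) tg by (simp add: U_def topological_group_def)
  ultimately show "\<exists>U. openin T U \<and> z \<in> U \<and> U \<subseteq> H"
    using openin_left_mult_preimage[OF tg N(1) inv_closed[OF zc]] unfolding U_def by blast
qed

lemma closedin_open_subgroup:
  assumes tg: "topological_group G T" and H: "subgroup H G" "openin T H"
  shows "closedin T H"
  unfolding closedin_def
proof (intro conjI)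
  show "H \<subseteq> topspace T"
    using H(2) by (rule openin_subset)
  show "openin T (topspace T - H)"
  proof (subst openin_subopen, intro ballI)
    fix z assume z: "z \<in> topspace T - H"
    then have zc: "z \<in> carrier G"
      using tg by (simp add: topological_group_def)
    define U where "U = {x \<in> topspace T. inv z \<otimes> x \<in> H}"
    have "x \<notin> H" if "x \<in> U" for x
    proof
      assume "x \<in> H"
      then have "(inv z \<otimes> x) \<otimes> inv x \<in> H"
        using that H(1) by (auto simp: U_def intro: subgroup.m_closed subgroup.m_inv_closed)
      then have "inv z \<in> H"
        using that zc tg by (simp add: U_def topological_group_def m_assoc)
      then show False
        using z H(1) by (metis DiffD2 inv_inv subgroup.m_inv_closed zc)
    qed
    then have "U \<subseteq> topspace T - H"
      by (auto simp: U_def)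
    moreover have "z \<in> U"
      using z zc H(1) by (simp add: U_def subgroup.one_closed)
    ultimately show "\<exists>U. openin T U \<and> z \<in> U \<and> U \<subseteq> topspace T - H"
      using openin_left_mult_preimage[OF tg H(2) inv_closed[OF zc]] unfolding U_def by blast
  qed
qed

end

definition translation_stabilizer :: "('a, 'b) monoid_scheme \<Rightarrow> ('a \<Rightarrow> 'c) set \<Rightarrow> 'a set" where
  "translation_stabilizer G V =
     {z \<in> carrier G. \<forall>w\<in>V. (\<lambda>x. w (x \<otimes>\<^bsub>G\<^esub> z)) \<in> V \<and> (\<lambda>x. w (x \<otimes>\<^bsub>G\<^esub> inv\<^bsub>G\<^esub> z)) \<in> V}"

context group
begin

lemma subgroup_translation_stabilizer:
  assumes cong: "\<And>w w'. w \<in> V \<Longrightarrow> \<forall>x\<in>carrier G. w' x = w x \<Longrightarrow> w' \<in> V"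
  shows "subgroup (translation_stabilizer G V) G"
proof -
  have comp: "(\<lambda>x. w (x \<otimes> (z \<otimes> z'))) \<in> V"
    if "z \<in> carrier G" "z' \<in> carrier G" "\<forall>w\<in>V. (\<lambda>x. w (x \<otimes> z)) \<in> V"
      "\<forall>w\<in>V. (\<lambda>x. w (x \<otimes> z')) \<in> V" "w \<in> V" for z z' w
  proof -
    have "(\<lambda>x. w (x \<otimes> z \<otimes> z')) \<in> V"
      using that(3)[rule_format, OF that(4)[rule_format, OF that(5)]] by simp
    then show ?thesis
      by (rule cong) (use that(1,2) in \<open>simp add: m_assoc\<close>)
  qed
  show ?thesis
  proof (rule subgroupI)
    show "translation_stabilizer G V \<subseteq> carrier G"
      by (auto simp: translation_stabilizer_def)
    have "\<one> \<in> translation_stabilizer G V"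
      using cong by (auto simp: translation_stabilizer_def)
    then show "translation_stabilizer G V \<noteq> {}" by blast
  next
    fix z assume "z \<in> translation_stabilizer G V"
    then show "inv z \<in> translation_stabilizer G V"
      by (auto simp: translation_stabilizer_def)
  next
    fix z z' assume "z \<in> translation_stabilizer G V" "z' \<in> translation_stabilizer G V"
    then show "z \<otimes> z' \<in> translation_stabilizer G V"
      using comp[of z z'] comp[of "inv z'" "inv z"] by (auto simp: translation_stabilizer_def inv_mult_group)
  qed
qed

lemma translation_stabilizer_interpolation:
  assumes "z \<in> translation_stabilizer G (interpolation_space (carrier G) I q v)"
    and "w \<in> interpolation_space (carrier G) I q v" "x \<in> carrier G"
  shows "w (x \<otimes> z) = (\<Sum>l\<in>I. w (q l \<otimes> z) * v l x)"
  using assms by (auto simp: translation_stabilizer_def interpolation_space_def)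

lemma right_translate_interpolation_space:
  assumes I: "finite I" "q ` I \<subseteq> carrier G" and v: "\<forall>l\<in>I. v l \<in> fun_span S"
    and z: "z \<in> carrier G"
    and S: "\<forall>s\<in>S. (\<lambda>x. s (x \<otimes> z)) \<in> interpolation_space (carrier G) I q v"
    and w: "w \<in> interpolation_space (carrier G) I q v"
  shows "(\<lambda>x. w (x \<otimes> z)) \<in> interpolation_space (carrier G) I q v"
proof -
  let ?V = "interpolation_space (carrier G) I q v"
  have "(\<lambda>x. v l (x \<otimes> z)) \<in> ?V" if "l \<in> I" for l
    using fun_span_comp[OF v[rule_format, OF that], of "\<lambda>x. x \<otimes> z"]
      fun_span_subset_interpolation_space[of "(\<lambda>s x. s (x \<otimes> z)) ` S"] S
    by blast
  then have "(\<lambda>x. \<Sum>l\<in>I. w (q l) * v l (x \<otimes> z)) \<in> fun_span ?V"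
    using I(1) by (intro fun_span_sum) (auto intro: fun_span_base)
  then have "(\<lambda>x. \<Sum>l\<in>I. w (q l) * v l (x \<otimes> z)) \<in> ?V"
    using fun_span_subset_interpolation_space[of ?V] by blast
  then show ?thesis
    by (rule interpolation_space_cong[OF I(2)]) (use w z in \<open>simp add: interpolation_space_def\<close>)
qed

lemma compactin_if_translates_spanned:
  assumes tg: "topological_group G T" and H: "closedin T H"
    and x0: "x0 \<in> carrier G" "f x0 \<noteq> 0"
    and v: "finite I" "\<forall>l\<in>I. C0 T (v l)"
    and c: "\<forall>z\<in>H. \<forall>l\<in>I. norm (c l z) \<le> C"
    and span: "\<forall>z\<in>H. \<forall>x\<in>carrier G. f (x \<otimes> z) = (\<Sum>l\<in>I. c l z * v l x)"
  shows "compactin T H"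
proof -
  have tsp: "topspace T = carrier G"
    using tg by (simp add: topological_group_def)
  have denom: "\<bar>C\<bar> * card I + 1 > 0"
    by (intro add_nonneg_pos) auto
  define \<delta> where "\<delta> = norm (f x0) / (\<bar>C\<bar> * card I + 1)"
  have \<delta>: "\<delta> > 0"
    using x0(2) denom by (simp add: \<delta>_def)
  define K where "K = (\<Union>l\<in>I. {y \<in> topspace T. \<delta> \<le> norm (v l y)})"
  have "H \<subseteq> (\<lambda>y. inv y \<otimes> x0) ` K"
  proof
    fix z assume z: "z \<in> H"
    then have zc: "z \<in> carrier G"
      using H closedin_subset tsp by blast
    define y where "y = x0 \<otimes> inv z"
    have yc: "y \<in> carrier G"
      using zc x0(1) by (simp add: y_def)
    have "y \<in> K"
    proof (rule ccontr)
      assume "y \<notin> K"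
      then have small: "norm (v l y) < \<delta>" if "l \<in> I" for l
        using that yc tsp by (auto simp: K_def not_le)
      have "y \<otimes> z = x0"
        using zc x0(1) by (simp add: y_def m_assoc)
      then have "f x0 = (\<Sum>l\<in>I. c l z * v l y)"
        using span z yc by metis
      then have "norm (f x0) \<le> (\<Sum>l\<in>I. norm (c l z) * norm (v l y))"
        using norm_sum[of "\<lambda>l. c l z * v l y" I] by (simp add: norm_mult)
      also have "\<dots> \<le> (\<Sum>l\<in>I. \<bar>C\<bar> * \<delta>)"
        using c z small by (intro sum_mono mult_mono) (auto intro: less_imp_le order.trans[OF _ abs_ge_self])
      also have "\<dots> < (\<bar>C\<bar> * card I + 1) * \<delta>"
        using \<delta> by (simp add: distrib_right)
      also have "\<dots> = norm (f x0)"
        using denom by (simp add: \<delta>_def)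
      finally show False by simp
    qed
    moreover have "z = inv y \<otimes> x0"
      using zc x0(1) by (simp add: y_def inv_mult_group m_assoc)
    ultimately show "z \<in> (\<lambda>y. inv y \<otimes> x0) ` K" by blast
  qed
  moreover have "compactin T K"
    unfolding K_def using v \<delta> by (intro compactin_Union) (auto intro: compactin_C0_norm_ge)
  then have "compactin T ((\<lambda>y. inv y \<otimes> x0) ` K)"
    using x0(1) by (intro image_compactin continuous_map_group_mult[OF tg] continuous_map_group_inv[OF tg]
        continuous_map_group_const[OF tg]) auto
  ultimately show ?thesis
    using closed_compactin H by blast
qed

lemma translation_stabilizer_compact_open:
  fixes f :: "'a \<Rightarrow> complex" and I :: "'i set" and q :: "'i \<Rightarrow> 'a" and v :: "'i \<Rightarrow> 'a \<Rightarrow> complex"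
  defines "V \<equiv> interpolation_space (carrier G) I q v"
  assumes tg: "topological_group G T" and f: "C0 T f" "x0 \<in> carrier G" "f x0 \<noteq> 0"
    and I: "finite I" "q ` I \<subseteq> carrier G" "\<forall>l\<in>I. C0 T (v l)"
    and fV: "f \<in> V"
    and N: "openin T N" "\<one> \<in> N" "\<forall>z\<in>N. \<forall>w\<in>V. (\<lambda>x. w (x \<otimes> z)) \<in> V"
  shows "subgroup (translation_stabilizer G V) G \<and> openin T (translation_stabilizer G V) \<and>
    compactin T (translation_stabilizer G V)"
proof (intro conjI)
  let ?H = "translation_stabilizer G V"
  show H: "subgroup ?H G"
    using interpolation_space_cong[OF I(2)] unfolding V_def by (rule subgroup_translation_stabilizer)
  define N' where "N' = N \<inter> {z \<in> topspace T. inv z \<in> N}"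
  have "openin T N'"
    unfolding N'_def
    by (intro openin_Int N(1) openin_continuous_map_preimage[OF continuous_map_group_inv[OF tg]])
       (simp add: continuous_map_id[unfolded id_def])
  moreover have "N' \<subseteq> ?H"
    using N(1,3) openin_subset tg by (fastforce simp: N'_def translation_stabilizer_def topological_group_def)
  moreover have "\<one> \<in> N'"
    using N(2) openin_subset[OF N(1)] by (auto simp: N'_def)
  ultimately show H_open: "openin T ?H"
    using subgroup_openin_if_nhd_one[OF tg H] by blast
  obtain C where "\<forall>x\<in>topspace T. norm (f x) \<le> C"
    using C0_bounded[OF f(1)] by blast
  then have "\<forall>z\<in>?H. \<forall>l\<in>I. norm (f (q l \<otimes> z)) \<le> C"
    using I(2) tg subgroup.subset[OF H] by (auto simp: topological_group_def)
  moreover have "\<forall>z\<in>?H. \<forall>x\<in>carrier G. f (x \<otimes> z) = (\<Sum>l\<in>I. f (q l \<otimes> z) * v l x)"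
    using translation_stabilizer_interpolation fV unfolding V_def by blast
  ultimately show "compactin T ?H"
    by (intro compactin_if_translates_spanned[where f = f and c = "\<lambda>l z. f (q l \<otimes> z)",
          OF tg closedin_open_subgroup[OF tg H H_open] f(2,3) I(1,3)])
qed

lemma interpolation_space_locally_invariant:
  assumes tg: "topological_group G T" and B: "openin T B" "finite B0" "B0 \<subseteq> B"
    and I: "finite I" "q ` I \<subseteq> carrier G"
    and v: "\<forall>l\<in>I. v l \<in> fun_span ((\<lambda>b x. f (x \<otimes> b)) ` B0)"
    and translates: "\<forall>b\<in>B. (\<lambda>x. f (x \<otimes> b)) \<in> interpolation_space (carrier G) I q v"
  obtains N where "openin T N" "\<one> \<in> N"
    "\<forall>z\<in>N. \<forall>w\<in>interpolation_space (carrier G) I q v.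
       (\<lambda>x. w (x \<otimes> z)) \<in> interpolation_space (carrier G) I q v"
proof
  have tsp: "topspace T = carrier G"
    using tg by (simp add: topological_group_def)
  have B0c: "B0 \<subseteq> carrier G"
    using B(1,3) openin_subset tsp by blast
  define N where "N = {z \<in> topspace T. \<forall>b\<in>B0. z \<otimes> b \<in> B}"
  show "openin T N"
    unfolding N_def using openin_right_mults_preimage[OF tg B(1,2) B0c] .
  show "\<one> \<in> N"
    using B(3) B0c tsp by (auto simp: N_def subset_iff)
  show "\<forall>z\<in>N. \<forall>w\<in>interpolation_space (carrier G) I q v.
          (\<lambda>x. w (x \<otimes> z)) \<in> interpolation_space (carrier G) I q v"
  proof (intro ballI)
    fix z w assume z: "z \<in> N" and w: "w \<in> interpolation_space (carrier G) I q v"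
    have zc: "z \<in> carrier G"
      using z tsp by (simp add: N_def)
    have "(\<lambda>x. f (x \<otimes> z \<otimes> b)) \<in> interpolation_space (carrier G) I q v" if "b \<in> B0" for b
    proof -
      have "(\<lambda>x. f (x \<otimes> (z \<otimes> b))) \<in> interpolation_space (carrier G) I q v"
        using translates z that by (simp add: N_def)
      then show ?thesis
        by (rule interpolation_space_cong[OF I(2)]) (use zc B0c that in \<open>auto simp: m_assoc\<close>)
    qed
    then have "\<forall>s\<in>(\<lambda>b x. f (x \<otimes> b)) ` B0. (\<lambda>x. s (x \<otimes> z)) \<in> interpolation_space (carrier G) I q v"
      by simp
    then show "(\<lambda>x. w (x \<otimes> z)) \<in> interpolation_space (carrier G) I q v"
      by (rule right_translate_interpolation_space[OF I v zc _ w])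
  qed
qed

lemma right_translate_in_span:
  fixes f g :: "'a \<Rightarrow> 'c::field"
  assumes eq: "\<forall>x\<in>carrier G. \<forall>y\<in>carrier G. f (x \<otimes> y) * g y = (\<Sum>i\<in>I. fs i x * gs i y)"
    and "a \<in> carrier G" "b \<in> carrier G" "g (a \<otimes> b) \<noteq> 0" "x \<in> carrier G"
  shows "f (x \<otimes> b) = (\<Sum>i\<in>I. (gs i (a \<otimes> b) / g (a \<otimes> b)) * fs i (x \<otimes> inv a))"
proof -
  have "inv a \<otimes> (a \<otimes> b) = b"
    using assms(2,3) by (simp add: m_assoc[symmetric])
  then have "x \<otimes> inv a \<otimes> (a \<otimes> b) = x \<otimes> b"
    using assms(2,3,5) by (simp add: m_assoc)
  then have prod: "f (x \<otimes> b) * g (a \<otimes> b) = (\<Sum>i\<in>I. fs i (x \<otimes> inv a) * gs i (a \<otimes> b))"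
    using eq[rule_format, of "x \<otimes> inv a" "a \<otimes> b"] assms(2,3,5) by simp
  have "f (x \<otimes> b) = f (x \<otimes> b) * g (a \<otimes> b) / g (a \<otimes> b)"
    using assms(4) by simp
  also have "\<dots> = (\<Sum>i\<in>I. fs i (x \<otimes> inv a) * gs i (a \<otimes> b)) / g (a \<otimes> b)"
    by (simp only: prod)
  also have "\<dots> = (\<Sum>i\<in>I. (gs i (a \<otimes> b) / g (a \<otimes> b)) * fs i (x \<otimes> inv a))"
    by (simp add: sum_divide_distrib ac_simps)
  finally show ?thesis .
qed

lemma interpolation_space_of_functional_equation:
  fixes f g :: "'a \<Rightarrow> complex" and fs gs :: "'i \<Rightarrow> 'a \<Rightarrow> complex"
  assumes tg: "topological_group G T" and f: "C0 T f" and g: "continuous_map T euclidean g"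
    and a: "a \<in> carrier G" "g a \<noteq> 0" and I: "finite I"
    and eq: "\<forall>x\<in>carrier G. \<forall>y\<in>carrier G. f (x \<otimes> y) * g y = (\<Sum>i\<in>I. fs i x * gs i y)"
  obtains q v N where "q ` I \<subseteq> carrier G" "\<forall>l\<in>I. C0 T (v l)"
    "f \<in> interpolation_space (carrier G) I q v" "openin T N" "\<one> \<in> N"
    "\<forall>z\<in>N. \<forall>w\<in>interpolation_space (carrier G) I q v.
       (\<lambda>x. w (x \<otimes> z)) \<in> interpolation_space (carrier G) I q v"
proof -
  have tsp: "topspace T = carrier G"
    using tg by (simp add: topological_group_def)
  define B where "B = {b \<in> topspace T. g (a \<otimes> b) \<in> - {0}}"
  define R where "R = (\<lambda>b x. f (x \<otimes> b))"
  have B_open: "openin T B"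
    unfolding B_def
    by (intro openin_continuous_map_preimage[where Y = euclidean]
        continuous_map_left_translate[OF tg g a(1)]) (simp add: open_Compl)
  have "\<exists>c. \<forall>x\<in>carrier G. R b x = (\<Sum>i\<in>I. c i * fs i (x \<otimes> inv a))" if "b \<in> B" for b
  proof -
    have "b \<in> carrier G" "g (a \<otimes> b) \<noteq> 0"
      using that tsp by (auto simp: B_def)
    then show ?thesis
      unfolding R_def
      by (intro exI[of _ "\<lambda>i. gs i (a \<otimes> b) / g (a \<otimes> b)"] ballI right_translate_in_span[OF eq a(1)])
  qed
  then have "\<forall>\<phi>\<in>R ` B. \<exists>c. \<forall>x\<in>carrier G. \<phi> x = (\<Sum>i\<in>I. c i * fs i (x \<otimes> inv a))"
    by blast
  from interpolation_basis_exists[OF I _ this]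
  obtain q v where q: "q ` I \<subseteq> carrier G" and v: "\<forall>l\<in>I. v l \<in> fun_span (R ` B)"
    and RV: "R ` B \<subseteq> interpolation_space (carrier G) I q v"
    using a(1) by blast
  obtain S0 where S0: "S0 \<subseteq> R ` B" "finite S0" "\<forall>l\<in>I. v l \<in> fun_span S0"
    using fun_span_finite_subset_family[OF I v] by blast
  obtain B0 where B0: "B0 \<subseteq> B" "finite B0" "S0 = R ` B0"
    using finite_subset_image[OF S0(2,1)] by blast
  have "\<forall>w\<in>R ` B. C0 T w"
    using C0_right_translate[OF tg f] by (auto simp: R_def B_def tsp)
  then have "\<forall>l\<in>I. C0 T (v l)"
    using v C0_fun_span by blast
  moreover have "f \<in> interpolation_space (carrier G) I q v"
  proof (rule interpolation_space_cong[OF q])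
    show "R \<one> \<in> interpolation_space (carrier G) I q v"
      using RV a tsp by (auto simp: B_def)
  qed (simp add: R_def)
  moreover have "\<forall>b\<in>B. (\<lambda>x. f (x \<otimes> b)) \<in> interpolation_space (carrier G) I q v"
    using RV by (auto simp: R_def)
  with S0(3) obtain N where "openin T N" "\<one> \<in> N"
    "\<forall>z\<in>N. \<forall>w\<in>interpolation_space (carrier G) I q v.
       (\<lambda>x. w (x \<otimes> z)) \<in> interpolation_space (carrier G) I q v"
    unfolding B0(3) R_def by (rule interpolation_space_locally_invariant[OF tg B_open B0(2,1) I q])
  ultimately show ?thesis
    using that q by blast
qed

end

theorem corollary1p3:
  fixes G :: "('a, 'b) monoid_scheme" and T :: "'a topology"
    and f g :: "'a \<Rightarrow> complex" and fs gs :: "nat \<Rightarrow> 'a \<Rightarrow> complex" and n :: nat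
  assumes "locally_compact_group G T"
    and "C0 T f" and "C0 T g"
    and "\<forall>i\<in>{1..n}. C0 T (fs i) \<and> C0 T (gs i)"
    and "\<exists>x\<in>carrier G. f x \<noteq> 0" and "\<exists>x\<in>carrier G. g x \<noteq> 0"
    and "\<forall>i\<in>{1..n}. \<exists>x\<in>carrier G. fs i x \<noteq> 0"
    and "\<forall>i\<in>{1..n}. \<exists>x\<in>carrier G. gs i x \<noteq> 0"
    and "\<forall>x\<in>carrier G. \<forall>y\<in>carrier G.
           f (x \<otimes>\<^bsub>G\<^esub> y) * g y = (\<Sum>i=1..n. fs i x * gs i y)"
  shows "\<exists>H. subgroup H G \<and> compactin T H \<and> openin T H \<and>
           (\<exists>f' g' :: nat \<Rightarrow> 'a \<Rightarrow> complex.
              (\<forall>j\<in>{1..n}. C0 T (f' j) \<and> continuous_map (subtopology T H) euclidean (g' j)) \<and>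
              (\<forall>x\<in>carrier G. \<forall>y\<in>H. f (x \<otimes>\<^bsub>G\<^esub> y) = (\<Sum>j=1..n. f' j x * g' j y)))"
proof -
  have tg: "topological_group G T"
    using assms(1) by (simp add: locally_compact_group_def)
  then interpret group G
    by (simp add: topological_group_def)
  obtain x0 where x0: "x0 \<in> carrier G" "f x0 \<noteq> 0"
    using assms(5) by blast
  obtain a where a: "a \<in> carrier G" "g a \<noteq> 0"
    using assms(6) by blast
  have g_cont: "continuous_map T euclidean g"
    using assms(3) by (simp add: C0_def)
  obtain q v N where q: "q ` {1..n} \<subseteq> carrier G" and v: "\<forall>l\<in>{1..n}. C0 T (v l)"
    and fV: "f \<in> interpolation_space (carrier G) {1..n} q v"
    and N: "openin T N" "\<one>\<^bsub>G\<^esub> \<in> N"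
      "\<forall>z\<in>N. \<forall>w\<in>interpolation_space (carrier G) {1..n} q v.
         (\<lambda>x. w (x \<otimes>\<^bsub>G\<^esub> z)) \<in> interpolation_space (carrier G) {1..n} q v"
    by (rule interpolation_space_of_functional_equation[OF tg assms(2) g_cont a
          finite_atLeastAtMost assms(9)])
  define H where "H = translation_stabilizer G (interpolation_space (carrier G) {1..n} q v)"
  have H: "subgroup H G" "openin T H" "compactin T H"
    using translation_stabilizer_compact_open[OF tg assms(2) x0 finite_atLeastAtMost q v fV N]
    unfolding H_def by auto
  have "continuous_map (subtopology T H) euclidean (\<lambda>y. f (q l \<otimes>\<^bsub>G\<^esub> y))" if "l \<in> {1..n}" for l
    using q that assms(2) unfolding C0_def
    by (intro continuous_map_from_subtopology continuous_map_left_translate[OF tg]) auto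
  moreover have "\<forall>x\<in>carrier G. \<forall>y\<in>H. f (x \<otimes>\<^bsub>G\<^esub> y) = (\<Sum>j=1..n. v j x * f (q j \<otimes>\<^bsub>G\<^esub> y))"
    using translation_stabilizer_interpolation[OF _ fV] unfolding H_def by (simp add: mult.commute)
  ultimately show ?thesis
    using H v
    by (intro exI[of _ H] conjI exI[of _ v] exI[of _ "\<lambda>l y. f (q l \<otimes>\<^bsub>G\<^esub> y)"] ballI) auto
qed

end
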